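(* Let $\Pi$, $y_n$, $\rho$, $\gamma$ be as in the context and $r>0$. The system of equations \[b_n=y_n-\frac1\gamma+\frac{\rho}{r\gamma}-\frac{1}{\gamma r}\sum_{n'=1}^N\pi_{nn'}e^{\gamma(b_n-b_{n'})},\quad n\in\{1,\dots,N\},\] has a unique solution $(b_1,\dots,b_N)\in\mathbb R^N$. The solution varies continuously with $r>0$, and $\min_n b_n\to\infty$ as $r$ decreases to zero.
   Context: $\Pi=(\pi_{nn'})$ is an $N\times N$ irreducible infinitesimal generator matrix (nonnegative off-diagonal entries, rows summing to zero, and for every nonempty proper subset $\mathcal M\subset\{1,\dots,N\}$ there are $n\in\mathcal M$, $n'\notin\mathcal M$ with $\pi_{nn'}\ne0$). $y_1,\dots,y_N$ are real numbers and $\rho,\gamma>0$. *)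

theory Defs
  imports "HOL-Analysis.Analysis"
begin

text \<open>States are the elements of a finite type 'n (so N = CARD('n) >= 1).
  A generator matrix Pi is a function 'n => 'n => real.\<close>

definition generator :: "('n::finite \<Rightarrow> 'n \<Rightarrow> real) \<Rightarrow> bool" where
  "generator P \<longleftrightarrow> (\<forall>n n'. n \<noteq> n' \<longrightarrow> P n n' \<ge> 0) \<and> (\<forall>n. (\<Sum>n'\<in>UNIV. P n n') = 0)"

definition irreducible_gen :: "('n::finite \<Rightarrow> 'n \<Rightarrow> real) \<Rightarrow> bool" where
  "irreducible_gen P \<longleftrightarrow> generator P \<and>
     (\<forall>M. M \<noteq> {} \<and> M \<noteq> UNIV \<longrightarrow> (\<exists>n\<in>M. \<exists>n'. n' \<notin> M \<and> P n n' \<noteq> 0))"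

definition solves :: "('n::finite \<Rightarrow> 'n \<Rightarrow> real) \<Rightarrow> ('n \<Rightarrow> real) \<Rightarrow> real \<Rightarrow> real \<Rightarrow> real \<Rightarrow> real^'n \<Rightarrow> bool" where
  "solves P y \<rho> \<gamma> r b \<longleftrightarrow> (\<forall>n. b $ n = y n - 1 / \<gamma> + \<rho> / (r * \<gamma>)
      - 1 / (\<gamma> * r) * (\<Sum>n'\<in>UNIV. P n n' * exp (\<gamma> * (b $ n - b $ n'))))"

end

(*
  Multiplying the n-th equation by gamma r turns the system into
    gamma r b_n + sum_n' pi_nn' phi (b_n - b_n') = f_n,   phi x = exp (gamma x).
  Since pi_nn' >= 0 for n' ~= n, the rows of Pi sum to zero and phi is nondecreasing, the coupling
  sum is monotone in the differences b_n - b_n' and vanishes on constant vectors. Evaluating both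
  systems at a coordinate where b - c is maximal gives the comparison principle
  max (b - c) <= max (f - g) / (gamma r) for a subsolution b and a supersolution c. It yields
  uniqueness, Lipschitz dependence of the solution on the data (hence continuity in r), and the
  lower bound b_n >= min y - 1/gamma + rho/(gamma r), which tends to infinity as r -> 0.
  Existence is Perron's method: among the subsolutions bounded below by a constant subsolution,
  one maximizing sum_n b_n is a solution, because a row with strict inequality could be raised.
*)
theory Submission
  imports Defs "HOL-Real_Asymp.Real_Asymp"
begin

lemma finite_ex_argmax: "\<exists>x. \<forall>y. (f :: 'a::finite \<Rightarrow> 'b::linorder) y \<le> f x"
proof -
  have "Max (range f) \<in> range f" by (rule Max_in) auto
  then obtain x where "f x = Max (range f)" by (metis imageE)
  then show ?thesis by (intro exI[of _ x]) simp
qed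

definition coupling :: "('n::finite \<Rightarrow> 'n \<Rightarrow> real) \<Rightarrow> (real \<Rightarrow> real) \<Rightarrow> real^'n \<Rightarrow> 'n \<Rightarrow> real" where
  "coupling P \<phi> b n = (\<Sum>n'\<in>UNIV. P n n' * \<phi> (b$n - b$n'))"

lemma coupling_const:
  assumes "generator P"
  shows "coupling P \<phi> (\<chi> _. k) n = 0"
proof -
  have "coupling P \<phi> (\<chi> _. k) n = (\<Sum>n'\<in>UNIV. P n n') * \<phi> 0"
    by (simp add: coupling_def sum_distrib_right)
  then show ?thesis using assms by (simp add: generator_def)
qed

lemma coupling_mono:
  assumes "generator P" "mono \<phi>" "\<forall>n'. c$n - c$n' \<le> b$n - b$n'"
  shows "coupling P \<phi> c n \<le> coupling P \<phi> b n"
  unfolding coupling_def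
proof (rule sum_mono)
  fix n'
  show "P n n' * \<phi> (c$n - c$n') \<le> P n n' * \<phi> (b$n - b$n')"
  proof (cases "n' = n")
    case False
    then have "P n n' \<ge> 0" using assms(1) by (simp add: generator_def)
    moreover have "\<phi> (c$n - c$n') \<le> \<phi> (b$n - b$n')" using assms(2,3) by (simp add: monoD)
    ultimately show ?thesis by (rule mult_left_mono[rotated])
  qed simp
qed

lemma coupled_comparison:
  assumes "generator P" "mono \<phi>" "a > 0"
    and sub: "\<forall>n. a * b$n + coupling P \<phi> b n \<le> f n"
    and super: "\<forall>n. g n \<le> a * c$n + coupling P \<phi> c n"
    and "\<forall>n. f n - g n \<le> d"
  shows "b$m - c$m \<le> d / a"
proof -
  obtain n0 where n0: "\<forall>n. b$n - c$n \<le> b$n0 - c$n0"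
    using finite_ex_argmax[of "\<lambda>n. b$n - c$n"] by blast
  have "coupling P \<phi> c n0 \<le> coupling P \<phi> b n0"
    using n0 by (intro coupling_mono[OF assms(1,2)]) (smt (verit))
  moreover have "a * (b$n0 - c$n0) \<le> f n0 - g n0 - (coupling P \<phi> b n0 - coupling P \<phi> c n0)"
    using sub[rule_format, of n0] super[rule_format, of n0] unfolding right_diff_distrib by linarith
  ultimately have "a * (b$n0 - c$n0) \<le> d"
    using assms(6) by (smt (verit))
  then have "b$n0 - c$n0 \<le> d / a" using assms(3) by (simp add: field_simps)
  then show ?thesis using n0 by (smt (verit))
qed

lemma coupled_lower_bound:
  assumes "generator P" "mono \<phi>" "a > 0"
    and "\<forall>n. a * k \<le> f n" and "\<forall>n. f n \<le> a * b$n + coupling P \<phi> b n"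
  shows "k \<le> b$m"
  using coupled_comparison[OF assms(1-3), of "\<chi> _. k" "\<lambda>_. a * k" f b 0 m] assms(4,5)
  by (simp add: coupling_const[OF assms(1)])

lemma coupled_upper_bound:
  assumes "generator P" "mono \<phi>" "a > 0"
    and "\<forall>n. a * b$n + coupling P \<phi> b n \<le> f n" and "\<forall>n. f n \<le> a * k"
  shows "b$m \<le> k"
  using coupled_comparison[OF assms(1-3), of b f "\<lambda>_. a * k" "\<chi> _. k" 0 m] assms(4,5)
  by (simp add: coupling_const[OF assms(1)])

lemma coupled_solution_dist:
  assumes "generator P" "mono \<phi>" "a > 0"
    and "\<forall>n. a * b$n + coupling P \<phi> b n = f n" and "\<forall>n. a * c$n + coupling P \<phi> c n = g n"
    and "\<forall>n. \<bar>f n - g n\<bar> \<le> d"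
  shows "\<bar>b$m - c$m\<bar> \<le> d / a"
proof -
  have "b$m - c$m \<le> d / a"
    using assms by (intro coupled_comparison[OF assms(1-3), of b f g]) (auto simp: abs_le_iff)
  moreover have "c$m - b$m \<le> d / a"
    using assms by (intro coupled_comparison[OF assms(1-3), of c g f]) (auto simp: abs_le_iff)
  ultimately show ?thesis by linarith
qed

lemma coupled_solution_unique:
  assumes "generator P" "mono \<phi>" "a > 0"
    and "\<forall>n. a * b$n + coupling P \<phi> b n = f n" and "\<forall>n. a * c$n + coupling P \<phi> c n = f n"
  shows "b = c"
  using coupled_solution_dist[OF assms, of 0] by (simp add: vec_eq_iff)

lemma coupled_subsolution_raise:
  assumes "generator P" "mono \<phi>" "continuous_on UNIV \<phi>"
    and sub: "\<forall>m. a * b$m + coupling P \<phi> b m \<le> f m"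
    and strict: "a * b$n + coupling P \<phi> b n < f n"
  shows "\<exists>t>0. \<forall>m. a * (b + t *\<^sub>R axis n 1)$m + coupling P \<phi> (b + t *\<^sub>R axis n 1) m \<le> f m"
proof -
  define v where "v t = b + t *\<^sub>R axis n 1" for t
  define row where "row t = a * v t $ n + coupling P \<phi> (v t) n" for t
  have "continuous_on UNIV row"
    unfolding row_def v_def coupling_def
    by (intro continuous_intros continuous_on_compose2[OF assms(3)]) auto
  then have "(row \<longlongrightarrow> row 0) (at_right 0)"
    by (metis continuous_on_eq_continuous_at isCont_def open_UNIV UNIV_I tendsto_within_subset subset_UNIV)
  moreover have "row 0 < f n" using strict by (simp add: row_def v_def)
  ultimately have "\<forall>\<^sub>F t in at_right 0. 0 < t \<and> row t < f n"
    using order_tendstoD(2) eventually_at_right_less eventually_conj by blast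
  then obtain t where t: "t > 0" "row t < f n"
    using eventually_happens'[OF trivial_limit_at_right_real] by blast
  have "a * v t $ m + coupling P \<phi> (v t) m \<le> f m" for m
  proof (cases "m = n")
    case True then show ?thesis using t by (simp add: row_def)
  next
    case False
    have "coupling P \<phi> (v t) m \<le> coupling P \<phi> b m"
      using False t by (intro coupling_mono[OF assms(1,2)]) (simp add: v_def axis_def)
    moreover have "v t $ m = b $ m" using False by (simp add: v_def axis_def)
    ultimately show ?thesis using sub by (smt (verit))
  qed
  then show ?thesis using t unfolding v_def by blast
qed

lemma coupled_solution_exists:
  assumes "generator P" "mono \<phi>" "continuous_on UNIV \<phi>" "a > 0"
  shows "\<exists>b. \<forall>n. a * b$n + coupling P \<phi> b n = f n"
proof -
  define lo where "lo = Min (range f) / a"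
  define hi where "hi = Max (range f) / a"
  define S where "S = {b. \<forall>n. a * b$n + coupling P \<phi> b n \<le> f n \<and> lo \<le> b$n}"
  have "closed S"
    unfolding S_def coupling_def
    by (intro closed_Collect_all closed_Collect_conj closed_Collect_le continuous_intros
        continuous_on_compose2[OF assms(3)]) auto
  moreover have "S \<subseteq> cbox (\<chi> _. lo) (\<chi> _. hi)"
  proof
    fix b assume "b \<in> S"
    moreover have "\<forall>n. f n \<le> a * hi" using assms(4) by (simp add: hi_def)
    ultimately show "b \<in> cbox (\<chi> _. lo) (\<chi> _. hi)"
      unfolding S_def mem_box_cart using coupled_upper_bound[OF assms(1,2,4), of b f hi] by auto
  qed
  ultimately have "compact S"
    by (metis bounded_cbox bounded_subset compact_eq_bounded_closed)
  moreover have "(\<chi> _. lo) \<in> S"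
    using assms(4) by (simp add: S_def lo_def coupling_const[OF assms(1)])
  then have "S \<noteq> {}" by blast
  moreover have "continuous_on S (\<lambda>b. \<Sum>i\<in>UNIV. b$i)" by (intro continuous_intros)
  ultimately obtain bs where bs: "bs \<in> S" and bs_max: "\<forall>b\<in>S. (\<Sum>i\<in>UNIV. b$i) \<le> (\<Sum>i\<in>UNIV. bs$i)"
    using continuous_attains_sup by blast
  have "a * bs$n + coupling P \<phi> bs n = f n" for n
  proof (rule ccontr)
    assume "a * bs$n + coupling P \<phi> bs n \<noteq> f n"
    with bs have "a * bs$n + coupling P \<phi> bs n < f n" by (simp add: S_def order_less_le)
    with bs obtain t where t: "t > 0"
      and t_sub: "\<forall>m. a * (bs + t *\<^sub>R axis n 1)$m + coupling P \<phi> (bs + t *\<^sub>R axis n 1) m \<le> f m"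
      using coupled_subsolution_raise[OF assms(1-3)] unfolding S_def by blast
    have "bs + t *\<^sub>R axis n 1 \<in> S"
      using bs t t_sub by (simp add: S_def axis_def add_increasing2)
    moreover have "(\<Sum>i\<in>UNIV. (bs + t *\<^sub>R axis n 1)$i) = (\<Sum>i\<in>UNIV. bs$i) + t"
      by (simp add: axis_def sum.distrib flip: sum_distrib_left)
    ultimately show False using bs_max t by fastforce
  qed
  then show ?thesis by blast
qed

lemma continuous_on_coupled_solution:
  fixes sol :: "'a::topological_space \<Rightarrow> real^'n::finite"
  assumes "generator P" "mono \<phi>"
    and a_cont: "continuous_on U a" and f_cont: "\<And>n. continuous_on U (\<lambda>s. f s n)"
    and a_pos: "\<And>s. s \<in> U \<Longrightarrow> a s > 0"
    and sol: "\<And>s n. s \<in> U \<Longrightarrow> a s * sol s $ n + coupling P \<phi> (sol s) n = f s n"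
  shows "continuous_on U sol"
proof -
  have "continuous_on U (\<lambda>s. sol s $ m)" for m
    unfolding continuous_on_def
  proof
    fix r assume r: "r \<in> U"
    define err where "err s = (\<Sum>n\<in>UNIV. \<bar>f s n - (f r n + (a s - a r) * sol r $ n)\<bar>) / a s" for s
    have "(err \<longlongrightarrow> err r) (at r within U)"
      unfolding err_def using r a_cont f_cont a_pos[OF r]
      by (intro tendsto_intros) (auto simp: continuous_on_def)
    then have err_lim: "(err \<longlongrightarrow> 0) (at r within U)" by (simp add: err_def)
    have "\<bar>sol s $ m - sol r $ m\<bar> \<le> err s" if s: "s \<in> U" for s
    proof -
      have "\<forall>n. a s * sol r $ n + coupling P \<phi> (sol r) n = f r n + (a s - a r) * sol r $ n"
        using sol[OF r] by (simp add: algebra_simps)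
      moreover have "\<bar>f s n - (f r n + (a s - a r) * sol r $ n)\<bar>
          \<le> (\<Sum>n\<in>UNIV. \<bar>f s n - (f r n + (a s - a r) * sol r $ n)\<bar>)" for n
        by (rule member_le_sum) auto
      ultimately show ?thesis
        using sol[OF s] unfolding err_def by (intro coupled_solution_dist[OF assms(1,2) a_pos[OF s]]) auto
    qed
    then have "\<forall>\<^sub>F s in at r within U. norm (sol s $ m - sol r $ m) \<le> err s"
      by (auto simp: eventually_at_filter)
    then have "((\<lambda>s. sol s $ m - sol r $ m) \<longlongrightarrow> 0) (at r within U)"
      using err_lim by (rule Lim_null_comparison)
    then show "((\<lambda>s. sol s $ m) \<longlongrightarrow> sol r $ m) (at r within U)"
      by (simp add: LIM_zero_iff)
  qed
  then show ?thesis using continuous_on_vec_lambda[of U "\<lambda>i s. sol s $ i"] by simp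
qed

lemma solves_iff_coupled:
  assumes "\<gamma> > 0" "r > 0"
  shows "solves P y \<rho> \<gamma> r b \<longleftrightarrow>
    (\<forall>n. \<gamma> * r * b$n + coupling P (\<lambda>x. exp (\<gamma> * x)) b n = \<gamma> * r * y n - r + \<rho>)"
proof -
  have row: "b$n = y n - 1 / \<gamma> + \<rho> / (r * \<gamma>) - 1 / (\<gamma> * r) * G \<longleftrightarrow>
      \<gamma> * r * b$n + G = \<gamma> * r * y n - r + \<rho>" for n G
  proof -
    have "y n - 1 / \<gamma> + \<rho> / (r * \<gamma>) - 1 / (\<gamma> * r) * G = (\<gamma> * r * y n - r + \<rho> - G) / (\<gamma> * r)"
      using assms by (simp add: field_simps)
    then show ?thesis using assms by (simp only:) (subst eq_divide_eq, auto simp: mult_ac)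
  qed
  show ?thesis by (simp only: solves_def coupling_def row)
qed

theorem lemma2:
  fixes P :: "'n::finite \<Rightarrow> 'n \<Rightarrow> real" and y :: "'n \<Rightarrow> real" and \<rho> \<gamma> :: real
  assumes "irreducible_gen P" and "\<rho> > 0" and "\<gamma> > 0"
  shows "(\<forall>r>0. \<exists>!b. solves P y \<rho> \<gamma> r b)
    \<and> continuous_on {0<..} (\<lambda>r. THE b. solves P y \<rho> \<gamma> r b)
    \<and> filterlim (\<lambda>r. Min (range (\<lambda>n. (THE b. solves P y \<rho> \<gamma> r b) $ n))) at_top (at_right 0)"
proof -
  have gen: "generator P" using assms(1) by (simp add: irreducible_gen_def)
  have mono: "mono (\<lambda>x. exp (\<gamma> * x))" using assms(3) by (intro monoI) simp
  have cont: "continuous_on UNIV (\<lambda>x. exp (\<gamma> * x))" by (intro continuous_intros)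
  define f where "f r n = \<gamma> * r * y n - r + \<rho>" for r n
  have uniq: "\<exists>!b. solves P y \<rho> \<gamma> r b" if r: "r > 0" for r
    using coupled_solution_exists[OF gen mono cont, of "\<gamma> * r" "f r"]
      coupled_solution_unique[OF gen mono, of "\<gamma> * r" _ "f r"]
    unfolding solves_iff_coupled[OF assms(3) r] f_def using assms(3) r by auto
  define sol where "sol r = (THE b. solves P y \<rho> \<gamma> r b)" for r
  have sol: "\<gamma> * r * sol r $ n + coupling P (\<lambda>x. exp (\<gamma> * x)) (sol r) n = f r n" if "r \<in> {0<..}" for r n
  proof -
    from that have r: "r > 0" by simp
    have "solves P y \<rho> \<gamma> r (sol r)" using theI'[OF uniq[OF r]] by (simp add: sol_def)
    then show ?thesis unfolding solves_iff_coupled[OF assms(3) r] f_def by blast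
  qed
  have "continuous_on {0<..} sol"
    using assms(3) by (intro continuous_on_coupled_solution[OF gen mono _ _ _ sol])
      (auto simp: f_def intro!: continuous_intros)
  moreover have "filterlim (\<lambda>r. Min (range (\<lambda>n. sol r $ n))) at_top (at_right 0)"
  proof (rule filterlim_at_top_mono)
    have "filterlim (\<lambda>r. c - 1 / \<gamma> + \<rho> / (\<gamma> * r)) at_top (at_right 0)" for c
      using assms(2,3) by real_asymp
    then show "filterlim (\<lambda>r. Min (range y) - 1 / \<gamma> + \<rho> / (\<gamma> * r)) at_top (at_right 0)" .
    have "Min (range y) - 1 / \<gamma> + \<rho> / (\<gamma> * r) \<le> sol r $ m" if "r > 0" for r m
      using that assms(3) sol[of r]
      by (intro coupled_lower_bound[OF gen mono, of "\<gamma> * r" _ "f r"]) (auto simp: f_def field_simps)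
    then show "\<forall>\<^sub>F r in at_right 0. Min (range y) - 1 / \<gamma> + \<rho> / (\<gamma> * r) \<le> Min (range (\<lambda>n. sol r $ n))"
      by (auto simp: eventually_at_right_less eventually_at_filter)
  qed
  ultimately show ?thesis using uniq unfolding sol_def by blast
qed

end
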